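(* Let $\phi\in\mathbb{R}$. Then there is a constant $c(\phi)>0$ such that for all $p\in(0,\infty)$ and each $\mathcal{E}_p\in\{\mathcal{U}_p,\mathcal{I}_p,\mathcal{M}_p\}$, \[ \mathcal{E}_p(E_\phi)\le c(\phi)^p\,\mathcal{E}_p(E_{\pi/2}). \]
   Context: For $\phi\in\mathbb{R}$ let $E_\phi=\big([0,1)\times\{0\}\big)\cup\{t(\cos\phi,\sin\phi):t\in[0,1)\}\subset\mathbb{R}^2$. For a set $X\subset\mathbb{R}^n$ and $x,y,z\in X$ define $\kappa(x,y,z)=1/r(x,y,z)$ if $x,y,z$ are pairwise distinct and $\kappa(x,y,z)=0$ otherwise, where $r(x,y,z)$ is the circumradius of $x,y,z$ (with $r=\infty$, i.e. $\kappa=0$, for collinear distinct points). Let $\kappa_i(x,y)=\sup_{z\in X}\kappa(x,y,z)$ and $\kappa_G(x)=\sup_{y,z\in X}\kappa(x,y,z)$. With $\mathcal{H}^1$ the one-dimensional Hausdorff measure restricted to $X$, define for $p\in(0,\infty)$ $\mathcal{M}_p(X)=\int_X\int_X\int_X\kappa^p(x,y,z)\,d\mathcal{H}^1(x)\,d\mathcal{H}^1(y)\,d\mathcal{H}^1(z)$, $\mathcal{I}_p(X)=\int_X\int_X\kappa_i^p(x,y)\,d\mathcal{H}^1(x)\,d\mathcal{H}^1(y)$, $\mathcal{U}_p(X)=\int_X\kappa_G^p(x)\,d\mathcal{H}^1(x)$. *)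

theory Defs
  imports "HOL-Analysis.Analysis"
begin

definition E_set :: "real \<Rightarrow> (real \<times> real) set" where
  "E_set \<phi> = {(t, 0) | t. 0 \<le> t \<and> t < 1} \<union> {(t * cos \<phi>, t * sin \<phi>) | t. 0 \<le> t \<and> t < 1}"

(* circumradius-based Menger curvature: 1 / circumradius for pairwise distinct points
   lying on a common circle (i.e. non-collinear), 0 otherwise *)
definition circumradius :: "'a::euclidean_space \<Rightarrow> 'a \<Rightarrow> 'a \<Rightarrow> real" where
  "circumradius x y z = (THE r. \<exists>c. dist c x = r \<and> dist c y = r \<and> dist c z = r)"

definition menger_kappa :: "'a::euclidean_space \<Rightarrow> 'a \<Rightarrow> 'a \<Rightarrow> real" where
  "menger_kappa x y z =
     (if x \<noteq> y \<and> y \<noteq> z \<and> x \<noteq> z \<and> (\<exists>c. dist c x = dist c y \<and> dist c y = dist c z)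
      then 1 / circumradius x y z else 0)"

definition kappa_i :: "'a::euclidean_space set \<Rightarrow> 'a \<Rightarrow> 'a \<Rightarrow> ennreal" where
  "kappa_i X x y = (SUP z\<in>X. ennreal (menger_kappa x y z))"

definition kappa_G :: "'a::euclidean_space set \<Rightarrow> 'a \<Rightarrow> ennreal" where
  "kappa_G X x = (SUP yz\<in>X \<times> X. ennreal (menger_kappa x (fst yz) (snd yz)))"

definition epow :: "ennreal \<Rightarrow> real \<Rightarrow> ennreal" where
  "epow t p = (if t = \<infinity> then \<infinity> else ennreal (enn2real t powr p))"

(* one-dimensional Hausdorff measure (normalised by diameters) *)
definition hausdorff1_delta :: "real \<Rightarrow> 'a::euclidean_space set \<Rightarrow> ennreal" where
  "hausdorff1_delta \<delta> A =
     (INF C\<in>{C :: nat \<Rightarrow> 'a set. A \<subseteq> (\<Union>i. C i) \<and> (\<forall>i. bounded (C i) \<and> diameter (C i) \<le> \<delta>)}.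
        (\<Sum>i. ennreal (diameter (C i))))"

definition hausdorff1_outer :: "'a::euclidean_space set \<Rightarrow> ennreal" where
  "hausdorff1_outer A = (SUP \<delta>\<in>{0<..}. hausdorff1_delta \<delta> A)"

definition H1 :: "'a::euclidean_space measure" where
  "H1 = measure_of UNIV (sets borel) hausdorff1_outer"

definition M_energy :: "real \<Rightarrow> 'a::euclidean_space set \<Rightarrow> ennreal" where
  "M_energy p X = (\<integral>\<^sup>+ x. \<integral>\<^sup>+ y. \<integral>\<^sup>+ z.
      indicator X x * indicator X y * indicator X z * ennreal (menger_kappa x y z powr p) \<partial>H1 \<partial>H1 \<partial>H1)"

definition I_energy :: "real \<Rightarrow> 'a::euclidean_space set \<Rightarrow> ennreal" where
  "I_energy p X = (\<integral>\<^sup>+ x. \<integral>\<^sup>+ y.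
      indicator X x * indicator X y * epow (kappa_i X x y) p \<partial>H1 \<partial>H1)"

definition U_energy :: "real \<Rightarrow> 'a::euclidean_space set \<Rightarrow> ennreal" where
  "U_energy p X = (\<integral>\<^sup>+ x. indicator X x * epow (kappa_G X x) p \<partial>H1)"

end

theory Submission imports Defs begin

(* If sin phi = 0 then E_phi lies on a line, every Menger curvature vanishes and all
   three energies of E_phi are 0.  Otherwise the linear shear
     A (a, b) = (a + b cos phi, b sin phi)
   maps E_{pi/2} bijectively onto E_phi: it is the identity on the horizontal segment and a
   rotation on the vertical one, so it transports the one-dimensional Hausdorff measure on
   E_{pi/2} to that on E_phi.  Moreover dist p q <= (1 + 2/|sin phi|) dist (A p) (A q), and A
   multiplies signed areas by sin phi; via the formula
   kappa = 4 |area| / (product of the side lengths) this gives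
     kappa (A x) (A y) (A z) <= C(phi) * kappa x y z,   C(phi) = |sin phi| (1 + 2/|sin phi|)^3.
   Changing variables in every integral (and bounding the suprema in kappa_i, kappa_G)
   yields each energy inequality with constant C(phi)^p. *)

section \<open>The measure H1 and its invariance under isometries\<close>

lemma space_H1: "space H1 = UNIV"
  unfolding H1_def by (simp add: space_measure_of_conv)

lemma sets_H1: "sets H1 = sets borel"
  unfolding H1_def sets_measure_of_conv by (simp add: sets.sigma_sets_eq[of borel, simplified])

lemma measurable_H1: "measurable H1 M = measurable borel M"
  by (rule measurable_cong_sets[OF sets_H1 refl])

(* On Borel sets, H1 is given by the outer measure (or is 0 if that fails to be a measure);
   either way it is determined by the outer measure, which is all invariance needs. *)
lemma emeasure_H1:
  fixes B :: "'a::euclidean_space set"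
  assumes "B \<in> sets borel"
  shows "emeasure H1 B = (if measure_space UNIV (sets borel) (hausdorff1_outer :: 'a set \<Rightarrow> ennreal)
                          then hausdorff1_outer B else 0)"
proof -
  have "sigma_sets UNIV (sets borel) = (sets borel :: 'a set set)"
    using sets.sigma_sets_eq[of borel] by simp
  then show ?thesis using assms unfolding H1_def emeasure_measure_of_conv by simp
qed

(* Preimages of covers under an isometry are covers with no larger diameters. *)
lemma hausdorff1_delta_isometric_preimage_le:
  fixes T :: "'a::euclidean_space \<Rightarrow> 'b::euclidean_space"
  assumes iso: "\<And>x y. dist (T x) (T y) = dist x y"
  shows "hausdorff1_delta \<delta> (T -` B) \<le> hausdorff1_delta \<delta> B"
  unfolding hausdorff1_delta_def
proof (rule INF_mono)
  fix C :: "nat \<Rightarrow> 'b set"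
  assume C: "C \<in> {C. B \<subseteq> (\<Union>i. C i) \<and> (\<forall>i. bounded (C i) \<and> diameter (C i) \<le> \<delta>)}"
  have pre: "bounded (T -` C i) \<and> diameter (T -` C i) \<le> diameter (C i)" for i
  proof -
    have b: "bounded (C i)" using C by auto
    have le: "dist x y \<le> diameter (C i)" if "x \<in> T -` C i" "y \<in> T -` C i" for x y
      using diameter_bounded_bound[OF b, of "T x" "T y"] that iso by simp
    have "bounded (T -` C i)"
      unfolding bounded_def using le by (cases "T -` C i = {}") blast+
    moreover have "diameter (T -` C i) \<le> diameter (C i)"
      using diameter_ge_0[OF b] le by (intro diameter_le) (auto simp: dist_norm)
    ultimately show ?thesis by simp
  qed
  show "\<exists>C'\<in>{C. T -` B \<subseteq> (\<Union>i. C i) \<and> (\<forall>i. bounded (C i) \<and> diameter (C i) \<le> \<delta>)}.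
          (\<Sum>i. ennreal (diameter (C' i))) \<le> (\<Sum>i. ennreal (diameter (C i)))"
  proof (intro bexI[of _ "\<lambda>i. T -` C i"])
    show "(\<Sum>i. ennreal (diameter (T -` C i))) \<le> (\<Sum>i. ennreal (diameter (C i)))"
      using pre by (intro suminf_le) (auto intro: ennreal_leI)
  qed (use C pre in \<open>fastforce intro: order_trans\<close>)+
qed

(* A surjective isometry has an isometric inverse, so the outer measure is invariant. *)
lemma hausdorff1_outer_isometric_preimage:
  fixes T :: "'a::euclidean_space \<Rightarrow> 'a"
  assumes iso: "\<And>x y. dist (T x) (T y) = dist x y" and "surj T"
  shows "hausdorff1_outer (T -` B) = hausdorff1_outer B"
proof -
  define S where "S = inv T"
  have TS: "T (S x) = x" for x unfolding S_def using \<open>surj T\<close> by (rule surj_f_inv_f)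
  have iso_S: "dist (S x) (S y) = dist x y" for x y using iso[of "S x" "S y"] by (simp add: TS)
  have "hausdorff1_delta \<delta> (T -` B) = hausdorff1_delta \<delta> B" for \<delta>
  proof (rule antisym)
    show "hausdorff1_delta \<delta> (T -` B) \<le> hausdorff1_delta \<delta> B"
      by (rule hausdorff1_delta_isometric_preimage_le[OF iso])
    have "hausdorff1_delta \<delta> (S -` (T -` B)) \<le> hausdorff1_delta \<delta> (T -` B)"
      by (rule hausdorff1_delta_isometric_preimage_le[OF iso_S])
    moreover have "S -` (T -` B) = B" by (auto simp: TS)
    ultimately show "hausdorff1_delta \<delta> B \<le> hausdorff1_delta \<delta> (T -` B)" by simp
  qed
  then show ?thesis unfolding hausdorff1_outer_def by simp
qed

lemma isometry_measurable_H1: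
  fixes T :: "'a::euclidean_space \<Rightarrow> 'a"
  assumes iso: "\<And>x y. dist (T x) (T y) = dist x y"
  shows "T \<in> measurable H1 H1"
proof -
  have "1-lipschitz_on UNIV T" using iso by (simp add: lipschitz_on_def)
  then have "continuous_on UNIV T" by (rule lipschitz_on_continuous_on)
  then show ?thesis
    using borel_measurable_continuous_onI by (simp add: measurable_cong_sets[OF sets_H1 sets_H1])
qed

(* H1 is invariant under surjective isometries, hence so are its integrals. *)
lemma nn_integral_H1_isometry:
  fixes T :: "'a::euclidean_space \<Rightarrow> 'a"
  assumes iso: "\<And>x y. dist (T x) (T y) = dist x y" and "surj T"
    and g: "g \<in> borel_measurable H1"
  shows "(\<integral>\<^sup>+x. g (T x) \<partial>H1) = (\<integral>\<^sup>+x. g x \<partial>H1)"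
proof -
  note T_meas = isometry_measurable_H1[OF iso]
  have distr_eq: "distr H1 H1 T = H1"
  proof (rule measure_eqI)
    fix A assume A: "A \<in> sets (distr H1 H1 T)"
    then have "T -` A \<in> sets borel"
      using measurable_sets[OF T_meas, of A] by (simp add: space_H1 sets_H1)
    then show "emeasure (distr H1 H1 T) A = emeasure H1 A"
      using A by (simp add: emeasure_distr[OF T_meas] space_H1 sets_H1 emeasure_H1
                    hausdorff1_outer_isometric_preimage[OF iso \<open>surj T\<close>])
  qed simp
  have "(\<integral>\<^sup>+x. g x \<partial>H1) = (\<integral>\<^sup>+x. g x \<partial>distr H1 H1 T)" by (simp add: distr_eq)
  also have "\<dots> = (\<integral>\<^sup>+x. g (T x) \<partial>H1)"
    using g by (intro nn_integral_distr[OF T_meas]) simp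
  finally show ?thesis by simp
qed

section \<open>Upper bounds for integrals of arbitrary non-negative functions\<close>

(* The curvature integrands are not known to be measurable; their integrals are suprema over
   measurable (indeed simple) minorants, which is all that the comparison arguments use. *)
lemma nn_integral_le_by_measurable_minorants:
  assumes "\<And>g. g \<in> borel_measurable M \<Longrightarrow> (\<And>x. g x \<le> f x) \<Longrightarrow> integral\<^sup>N M g \<le> B"
  shows "integral\<^sup>N M f \<le> B"
  unfolding nn_integral_def
proof (rule SUP_least)
  fix g assume "g \<in> {g. simple_function M g \<and> g \<le> f}"
  then have sg: "simple_function M g" and "\<And>x. g x \<le> f x" by (auto simp: le_fun_def)
  then have "integral\<^sup>N M g \<le> B" using assms borel_measurable_simple_function by blast
  then show "integral\<^sup>S M g \<le> B" by (simp add: nn_integral_eq_simple_integral[OF sg])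
qed

lemma nn_integral_cmult_le:
  assumes r: "0 < r"
  shows "(\<integral>\<^sup>+x. ennreal r * f x \<partial>M) \<le> ennreal r * integral\<^sup>N M f"
proof (rule nn_integral_le_by_measurable_minorants)
  fix g assume g: "g \<in> borel_measurable M" and le: "\<And>x. g x \<le> ennreal r * f x"
  have inv: "ennreal (1/r) * ennreal r = 1" using r by (simp flip: ennreal_mult)
  define h where "h x = ennreal (1/r) * g x" for x
  have gh: "g x = ennreal r * h x" for x
    unfolding h_def by (simp add: mult.assoc[symmetric] inv mult.commute[of "ennreal r"])
  have hf: "h x \<le> f x" for x
  proof -
    have "h x \<le> ennreal (1/r) * (ennreal r * f x)" unfolding h_def by (rule mult_left_mono[OF le]) simp
    also have "\<dots> = f x" by (simp add: mult.assoc[symmetric] inv)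
    finally show ?thesis .
  qed
  have "integral\<^sup>N M g = ennreal r * (\<integral>\<^sup>+x. h x \<partial>M)"
    unfolding gh using g by (intro nn_integral_cmult) (simp add: h_def)
  also have "\<dots> \<le> ennreal r * integral\<^sup>N M f" by (intro mult_left_mono nn_integral_mono hf) simp
  finally show "integral\<^sup>N M g \<le> ennreal r * integral\<^sup>N M f" .
qed

lemma nn_integral_weighted_le:
  assumes r: "0 < r" and le: "\<And>x. f x \<le> ennreal r * g x"
  shows "(\<integral>\<^sup>+x. h x * f x \<partial>M) \<le> ennreal r * (\<integral>\<^sup>+x. h x * g x \<partial>M)"
proof -
  have "(\<integral>\<^sup>+x. h x * f x \<partial>M) \<le> (\<integral>\<^sup>+x. ennreal r * (h x * g x) \<partial>M)"
    using le by (intro nn_integral_mono) (metis mult.left_commute mult_left_mono zero_le)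
  also have "\<dots> \<le> ennreal r * (\<integral>\<^sup>+x. h x * g x \<partial>M)" by (rule nn_integral_cmult_le[OF r])
  finally show ?thesis .
qed

lemma nn_integral_indicator_factor:
  "(\<integral>\<^sup>+y. indicator S x * f y \<partial>M) = (indicator S x :: ennreal) * (\<integral>\<^sup>+y. f y \<partial>M)"
  by (cases "x \<in> S") simp_all

section \<open>Changing variables from E_phi to E_{pi/2}\<close>

(* Rot phi is the rotation taking the vertical unit vector to (cos phi, sin phi). *)
definition Rot :: "real \<Rightarrow> real \<times> real \<Rightarrow> real \<times> real" where
  "Rot \<phi> p = (fst p * sin \<phi> + snd p * cos \<phi>, snd p * sin \<phi> - fst p * cos \<phi>)"

definition Rot_inv :: "real \<Rightarrow> real \<times> real \<Rightarrow> real \<times> real" where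
  "Rot_inv \<phi> p = (fst p * sin \<phi> - snd p * cos \<phi>, fst p * cos \<phi> + snd p * sin \<phi>)"

lemma Rot_Rot_inv: "Rot \<phi> (Rot_inv \<phi> p) = p"
proof -
  have "(sin \<phi>)\<^sup>2 + (cos \<phi>)\<^sup>2 = 1" by simp
  then show ?thesis unfolding Rot_def Rot_inv_def
    by (cases p) (simp add: algebra_simps power2_eq_square flip: distrib_left)
qed

lemma Rot_inv_Rot: "Rot_inv \<phi> (Rot \<phi> p) = p"
proof -
  have "(sin \<phi>)\<^sup>2 + (cos \<phi>)\<^sup>2 = 1" by simp
  then show ?thesis unfolding Rot_def Rot_inv_def
    by (cases p) (simp add: algebra_simps power2_eq_square flip: distrib_left)
qed

lemma Rot_inv_pi_half: "Rot_inv (pi/2) p = p"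
  by (simp add: Rot_inv_def)

lemma dist_pair: "dist (a::real, b::real) (c, d) = sqrt ((a - c)\<^sup>2 + (b - d)\<^sup>2)"
  by (simp add: dist_Pair_Pair dist_real_def)

lemma dist_Rot: "dist (Rot \<phi> p) (Rot \<phi> q) = dist p q"
proof -
  obtain a b c d where pq: "p = (a, b)" "q = (c, d)" by (cases p, cases q)
  have "(a * sin \<phi> + b * cos \<phi> - (c * sin \<phi> + d * cos \<phi>))\<^sup>2
          + (b * sin \<phi> - a * cos \<phi> - (d * sin \<phi> - c * cos \<phi>))\<^sup>2
      = ((a - c)\<^sup>2 + (b - d)\<^sup>2) * ((sin \<phi>)\<^sup>2 + (cos \<phi>)\<^sup>2)"
    unfolding power2_eq_square by algebra
  then show ?thesis unfolding pq Rot_def dist_pair by simp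
qed

lemma nn_integral_H1_Rot:
  "g \<in> borel_measurable H1 \<Longrightarrow> (\<integral>\<^sup>+x. g (Rot \<phi> x) \<partial>H1) = (\<integral>\<^sup>+x. g x \<partial>H1)"
  by (rule nn_integral_H1_isometry[OF dist_Rot]) (metis Rot_Rot_inv surjI)

definition shear :: "real \<Rightarrow> real \<times> real \<Rightarrow> real \<times> real" where
  "shear \<phi> p = (fst p + snd p * cos \<phi>, snd p * sin \<phi>)"

definition horizontal_arm :: "(real \<times> real) set" where
  "horizontal_arm = {p. snd p = 0 \<and> 0 \<le> fst p \<and> fst p < 1}"

definition vertical_arm :: "(real \<times> real) set" where
  "vertical_arm = {p. fst p = 0 \<and> 0 < snd p \<and> snd p < 1}"

lemma shear_horizontal_arm: "x \<in> horizontal_arm \<Longrightarrow> shear \<phi> x = x"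
  by (cases x) (simp add: shear_def horizontal_arm_def)

lemma shear_vertical_arm: "x \<in> vertical_arm \<Longrightarrow> shear \<phi> x = Rot \<phi> x"
  by (cases x) (simp add: shear_def vertical_arm_def Rot_def)

lemma shear_image_E_set: "shear \<phi> ` E_set (pi/2) = E_set \<phi>"
proof -
  have E_pi_half: "E_set (pi/2) = {(t, 0) | t. 0 \<le> t \<and> t < 1} \<union> {(0, t) | t. 0 \<le> t \<and> t < 1}"
    by (simp add: E_set_def)
  have "shear \<phi> ` {(t, 0) | t. 0 \<le> t \<and> t < 1} = {(t, 0) | t. 0 \<le> t \<and> t < 1}"
    by (force simp: shear_def)
  moreover have "shear \<phi> ` {(0, t) | t. 0 \<le> t \<and> t < 1} = {(t * cos \<phi>, t * sin \<phi>) | t. 0 \<le> t \<and> t < 1}"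
    by (force simp: shear_def)
  ultimately show ?thesis unfolding E_pi_half image_Un E_set_def by simp
qed

lemma indicator_E_set:
  assumes s: "sin \<phi> \<noteq> 0"
  shows "indicator (E_set \<phi>) x = indicator horizontal_arm x + (indicator vertical_arm (Rot_inv \<phi> x) :: ennreal)"
proof -
  have Rot_vertical: "Rot \<phi> (0, t) = (t * cos \<phi>, t * sin \<phi>)" for t by (simp add: Rot_def)
  have "x \<in> E_set \<phi> \<longleftrightarrow> x \<in> horizontal_arm \<or> Rot_inv \<phi> x \<in> vertical_arm"
  proof
    assume "x \<in> E_set \<phi>"
    then obtain t where t: "0 \<le> t" "t < 1" "x = (t, 0) \<or> x = (t * cos \<phi>, t * sin \<phi>)"
      unfolding E_set_def by auto
    then have "x = (t, 0) \<or> (0 < t \<and> Rot_inv \<phi> x = (0, t))"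
      by (cases "t = 0") (auto simp flip: Rot_vertical simp: Rot_inv_Rot)
    then show "x \<in> horizontal_arm \<or> Rot_inv \<phi> x \<in> vertical_arm"
      using t by (auto simp: horizontal_arm_def vertical_arm_def)
  next
    assume "x \<in> horizontal_arm \<or> Rot_inv \<phi> x \<in> vertical_arm"
    then show "x \<in> E_set \<phi>"
    proof
      assume "Rot_inv \<phi> x \<in> vertical_arm"
      then obtain t where t: "Rot_inv \<phi> x = (0, t)" "0 < t" "t < 1"
        unfolding vertical_arm_def by (cases "Rot_inv \<phi> x") auto
      then have "x = (t * cos \<phi>, t * sin \<phi>)" by (metis Rot_Rot_inv Rot_vertical)
      then show ?thesis unfolding E_set_def using t by auto
    qed (cases x, auto simp: E_set_def horizontal_arm_def)
  qed
  moreover have "\<not> (x \<in> horizontal_arm \<and> Rot_inv \<phi> x \<in> vertical_arm)"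
  proof
    assume h: "x \<in> horizontal_arm \<and> Rot_inv \<phi> x \<in> vertical_arm"
    then obtain t where t: "Rot_inv \<phi> x = (0, t)" "0 < t"
      unfolding vertical_arm_def by (cases "Rot_inv \<phi> x") auto
    then have "x = (t * cos \<phi>, t * sin \<phi>)" by (metis Rot_Rot_inv Rot_vertical)
    then show False using h s t by (simp add: horizontal_arm_def)
  qed
  ultimately show ?thesis by (auto simp: indicator_def)
qed

lemma nn_integral_E_set_measurable:
  assumes s: "sin \<phi> \<noteq> 0" and g: "g \<in> borel_measurable H1"
  shows "(\<integral>\<^sup>+x. indicator (E_set \<phi>) x * g x \<partial>H1)
       = (\<integral>\<^sup>+x. indicator (E_set (pi/2)) x * g (shear \<phi> x) \<partial>H1)"
proof -
  have gb [measurable]: "g \<in> borel_measurable borel" using g by (simp add: measurable_H1)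
  have fst_b: "(fst :: real \<times> real \<Rightarrow> real) \<in> borel_measurable borel"
    and snd_b: "(snd :: real \<times> real \<Rightarrow> real) \<in> borel_measurable borel"
    by (intro borel_measurable_continuous_onI continuous_intros)+
  have arm_eq: "horizontal_arm = fst -` {0..<1} \<inter> snd -` {0}" "vertical_arm = fst -` {0} \<inter> snd -` {0<..<1}"
    by (auto simp: horizontal_arm_def vertical_arm_def)
  have [measurable]: "horizontal_arm \<in> sets borel" "vertical_arm \<in> sets borel"
    unfolding arm_eq
    by (intro sets.Int measurable_sets_borel[OF fst_b] measurable_sets_borel[OF snd_b];
        simp add: atLeastLessThan_borel greaterThanLessThan_borel)+
  have [measurable]: "shear \<phi> \<in> borel_measurable borel" "Rot \<phi> \<in> borel_measurable borel"
    "Rot_inv \<phi> \<in> borel_measurable borel"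
    unfolding shear_def Rot_def Rot_inv_def
    by (intro borel_measurable_continuous_onI continuous_intros)+
  have "(\<integral>\<^sup>+x. indicator (E_set \<phi>) x * g x \<partial>H1)
      = (\<integral>\<^sup>+x. indicator horizontal_arm x * g x \<partial>H1)
        + (\<integral>\<^sup>+x. indicator vertical_arm (Rot_inv \<phi> x) * g x \<partial>H1)"
    unfolding indicator_E_set[OF s] distrib_right by (intro nn_integral_add) (simp_all add: measurable_H1)
  also have "(\<integral>\<^sup>+x. indicator vertical_arm (Rot_inv \<phi> x) * g x \<partial>H1)
      = (\<integral>\<^sup>+x. indicator vertical_arm (Rot_inv \<phi> (Rot \<phi> x)) * g (Rot \<phi> x) \<partial>H1)"
    by (rule nn_integral_H1_Rot[symmetric]) (simp add: measurable_H1)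
  also have "\<dots> = (\<integral>\<^sup>+x. indicator vertical_arm x * g (shear \<phi> x) \<partial>H1)"
    by (rule nn_integral_cong) (auto simp: Rot_inv_Rot shear_vertical_arm indicator_def)
  also have "(\<integral>\<^sup>+x. indicator horizontal_arm x * g x \<partial>H1)
      = (\<integral>\<^sup>+x. indicator horizontal_arm x * g (shear \<phi> x) \<partial>H1)"
    by (rule nn_integral_cong) (auto simp: shear_horizontal_arm indicator_def)
  also have "(\<integral>\<^sup>+x. indicator horizontal_arm x * g (shear \<phi> x) \<partial>H1)
        + (\<integral>\<^sup>+x. indicator vertical_arm x * g (shear \<phi> x) \<partial>H1)
      = (\<integral>\<^sup>+x. indicator (E_set (pi/2)) x * g (shear \<phi> x) \<partial>H1)"
    unfolding indicator_E_set[of "pi/2", simplified] Rot_inv_pi_half distrib_right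
    by (intro nn_integral_add[symmetric]) (simp_all add: measurable_H1)
  finally show ?thesis .
qed

lemma nn_integral_E_set_le:
  assumes s: "sin \<phi> \<noteq> 0"
  shows "(\<integral>\<^sup>+x. indicator (E_set \<phi>) x * f x \<partial>H1)
       \<le> (\<integral>\<^sup>+x. indicator (E_set (pi/2)) x * f (shear \<phi> x) \<partial>H1)"
proof (rule nn_integral_le_by_measurable_minorants)
  fix g assume g: "g \<in> borel_measurable H1" and le: "\<And>x. g x \<le> indicator (E_set \<phi>) x * f x"
  have "integral\<^sup>N H1 g = (\<integral>\<^sup>+x. indicator (E_set \<phi>) x * g x \<partial>H1)"
    using le by (intro nn_integral_cong) (metis indicator_simps mult_1 mult_zero_left le_zero_eq)
  also have "\<dots> = (\<integral>\<^sup>+x. indicator (E_set (pi/2)) x * g (shear \<phi> x) \<partial>H1)"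
    by (rule nn_integral_E_set_measurable[OF s g])
  also have "\<dots> \<le> (\<integral>\<^sup>+x. indicator (E_set (pi/2)) x * f (shear \<phi> x) \<partial>H1)"
  proof (rule nn_integral_mono)
    fix x
    have "x \<in> E_set (pi/2) \<Longrightarrow> shear \<phi> x \<in> E_set \<phi>" using shear_image_E_set by blast
    then show "indicator (E_set (pi/2)) x * g (shear \<phi> x) \<le> indicator (E_set (pi/2)) x * f (shear \<phi> x)"
      using le[of "shear \<phi> x"] by (cases "x \<in> E_set (pi/2)") auto
  qed
  finally show "integral\<^sup>N H1 g \<le> (\<integral>\<^sup>+x. indicator (E_set (pi/2)) x * f (shear \<phi> x) \<partial>H1)" .
qed

section \<open>Menger curvature in the plane\<close>

(* Twice the signed area of the triangle x y z. *)
definition orient :: "real \<times> real \<Rightarrow> real \<times> real \<Rightarrow> real \<times> real \<Rightarrow> real" where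
  "orient x y z = (fst y - fst x) * (snd z - snd x) - (snd y - snd x) * (fst z - fst x)"

(* The classical formula kappa = 4 area / (product of the side lengths). *)
definition area_curvature :: "real \<times> real \<Rightarrow> real \<times> real \<Rightarrow> real \<times> real \<Rightarrow> real" where
  "area_curvature x y z = 2 * \<bar>orient x y z\<bar> / (dist x y * dist y z * dist x z)"

lemma area_curvature_nonneg: "0 \<le> area_curvature x y z"
  unfolding area_curvature_def by simp

lemma equidistant_iff_linear:
  fixes c1 c2 x1 x2 y1 y2 z1 z2 :: real
  shows "(dist (c1,c2) (x1,x2) = dist (c1,c2) (y1,y2) \<and> dist (c1,c2) (y1,y2) = dist (c1,c2) (z1,z2)) \<longleftrightarrow>
    (2*((c1-x1)*(y1-x1) + (c2-x2)*(y2-x2)) = (y1-x1)\<^sup>2 + (y2-x2)\<^sup>2 \<and>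
     2*((c1-x1)*(z1-x1) + (c2-x2)*(z2-x2)) = (z1-x1)\<^sup>2 + (z2-x2)\<^sup>2)"
proof -
  have "dist (c1,c2) (x1,x2) = dist (c1,c2) (y1,y2) \<longleftrightarrow>
        2*((c1-x1)*(y1-x1) + (c2-x2)*(y2-x2)) = (y1-x1)\<^sup>2 + (y2-x2)\<^sup>2"
    by (simp add: dist_pair power2_eq_square algebra_simps)
  moreover have "dist (c1,c2) (x1,x2) = dist (c1,c2) (z1,z2) \<longleftrightarrow>
        2*((c1-x1)*(z1-x1) + (c2-x2)*(z2-x2)) = (z1-x1)\<^sup>2 + (z2-x2)\<^sup>2"
    by (simp add: dist_pair power2_eq_square algebra_simps)
  ultimately show ?thesis by auto
qed

(* If u, v are parallel, non-zero and distinct (three distinct collinear points), the system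
   has no solution. *)
lemma parallel_system_unsolvable:
  fixes w1 w2 u1 u2 v1 v2 :: real
  assumes e1: "2*(w1*u1 + w2*u2) = u1\<^sup>2 + u2\<^sup>2" and e2: "2*(w1 * v1 + w2 * v2) = v1\<^sup>2 + v2\<^sup>2"
    and D: "u1 * v2 - u2 * v1 = 0"
    and nu: "(u1,u2) \<noteq> (0,0)" and nv: "(v1,v2) \<noteq> (0,0)" and nuv: "(u1,u2) \<noteq> (v1,v2)"
  shows False
proof -
  let ?nu = "u1\<^sup>2 + u2\<^sup>2" and ?nv = "v1\<^sup>2 + v2\<^sup>2" and ?d = "u1 * v1 + u2 * v2"
  have f1: "?nu * v1 = ?nv * u1" and f2: "?nu * v2 = ?nv * u2" using e1 e2 D by algebra+
  have g1: "?nu * ?d = ?nv * ?nu" and g2: "?nu * ?nv = ?nv * ?d" using f1 f2 by algebra+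
  have "?nu \<noteq> 0" using nu by (simp add: sum_power2_eq_zero_iff)
  moreover have "?nv \<noteq> 0" using nv by (simp add: sum_power2_eq_zero_iff)
  ultimately have "?d = ?nv" "?d = ?nu" using g1 g2 by (metis mult.commute mult_left_cancel)+
  moreover have "(u1 - v1)\<^sup>2 + (u2 - v2)\<^sup>2 = ?nu + ?nv - 2 * ?d" by (simp add: power2_eq_square algebra_simps)
  ultimately have "(u1 - v1)\<^sup>2 + (u2 - v2)\<^sup>2 = 0" by simp
  then show False using nuv by (simp add: sum_power2_eq_zero_iff)
qed

(* For non-collinear points the linear system has the unique solution given by Cramer's rule. *)
lemma circumcenter_unique:
  fixes w1 w2 u1 u2 v1 v2 :: real
  assumes e1: "2*(w1*u1 + w2*u2) = u1\<^sup>2 + u2\<^sup>2" and e2: "2*(w1 * v1 + w2 * v2) = v1\<^sup>2 + v2\<^sup>2"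
    and D: "u1 * v2 - u2 * v1 \<noteq> 0"
  shows "w1 = ((u1\<^sup>2 + u2\<^sup>2) * v2 - (v1\<^sup>2 + v2\<^sup>2)*u2) / (2*(u1 * v2 - u2 * v1))"
    and "w2 = ((v1\<^sup>2 + v2\<^sup>2)*u1 - (u1\<^sup>2 + u2\<^sup>2) * v1) / (2*(u1 * v2 - u2 * v1))"
proof -
  have "w1 * (2*(u1 * v2 - u2 * v1)) = (u1\<^sup>2 + u2\<^sup>2) * v2 - (v1\<^sup>2 + v2\<^sup>2)*u2"
    and "w2 * (2*(u1 * v2 - u2 * v1)) = (v1\<^sup>2 + v2\<^sup>2)*u1 - (u1\<^sup>2 + u2\<^sup>2) * v1"
    using e1 e2 by algebra+
  then show "w1 = ((u1\<^sup>2 + u2\<^sup>2) * v2 - (v1\<^sup>2 + v2\<^sup>2)*u2) / (2*(u1 * v2 - u2 * v1))"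
    and "w2 = ((v1\<^sup>2 + v2\<^sup>2)*u1 - (u1\<^sup>2 + u2\<^sup>2) * v1) / (2*(u1 * v2 - u2 * v1))"
    using D by (simp_all add: eq_divide_eq)
qed

(* The Cramer solution does solve the system, and its squared length is the squared
   circumradius |u|^2 |v|^2 |v - u|^2 / (4 D^2). *)
lemma circumcenter_exists:
  fixes u1 u2 v1 v2 :: real
  assumes D: "u1 * v2 - u2 * v1 \<noteq> 0"
  defines "w1 \<equiv> ((u1\<^sup>2 + u2\<^sup>2) * v2 - (v1\<^sup>2 + v2\<^sup>2)*u2) / (2*(u1 * v2 - u2 * v1))"
    and "w2 \<equiv> ((v1\<^sup>2 + v2\<^sup>2)*u1 - (u1\<^sup>2 + u2\<^sup>2) * v1) / (2*(u1 * v2 - u2 * v1))"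
  shows "2*(w1*u1 + w2*u2) = u1\<^sup>2 + u2\<^sup>2" and "2*(w1 * v1 + w2 * v2) = v1\<^sup>2 + v2\<^sup>2"
    and "(w1\<^sup>2 + w2\<^sup>2) * (4 * (u1 * v2 - u2 * v1)\<^sup>2)
         = (u1\<^sup>2 + u2\<^sup>2) * (v1\<^sup>2 + v2\<^sup>2) * ((v1-u1)\<^sup>2 + (v2-u2)\<^sup>2)"
proof -
  define N1 where "N1 = (u1\<^sup>2 + u2\<^sup>2) * v2 - (v1\<^sup>2 + v2\<^sup>2)*u2"
  define N2 where "N2 = (v1\<^sup>2 + v2\<^sup>2)*u1 - (u1\<^sup>2 + u2\<^sup>2) * v1"
  define DD where "DD = u1 * v2 - u2 * v1"
  have DD: "DD \<noteq> 0" using D by (simp add: DD_def)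
  have w: "w1 = N1 / (2 * DD)" "w2 = N2 / (2 * DD)" unfolding w1_def w2_def N1_def N2_def DD_def by simp_all
  have "N1 * u1 + N2 * u2 = (u1\<^sup>2 + u2\<^sup>2) * DD" "N1 * v1 + N2 * v2 = (v1\<^sup>2 + v2\<^sup>2) * DD"
    unfolding N1_def N2_def DD_def by algebra+
  then show "2*(w1*u1 + w2*u2) = u1\<^sup>2 + u2\<^sup>2" "2*(w1 * v1 + w2 * v2) = v1\<^sup>2 + v2\<^sup>2"
    unfolding w using DD by (simp_all add: field_simps)
  have "w1\<^sup>2 + w2\<^sup>2 = (N1\<^sup>2 + N2\<^sup>2) / (4 * DD\<^sup>2)"
    unfolding w by (simp add: power_divide add_divide_distrib power_mult_distrib)
  then have "(w1\<^sup>2 + w2\<^sup>2) * (4 * DD\<^sup>2) = N1\<^sup>2 + N2\<^sup>2" using DD by simp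
  also have "\<dots> = (u1\<^sup>2 + u2\<^sup>2) * (v1\<^sup>2 + v2\<^sup>2) * ((v1-u1)\<^sup>2 + (v2-u2)\<^sup>2)"
    unfolding N1_def N2_def by algebra
  finally show "(w1\<^sup>2 + w2\<^sup>2) * (4 * (u1 * v2 - u2 * v1)\<^sup>2)
         = (u1\<^sup>2 + u2\<^sup>2) * (v1\<^sup>2 + v2\<^sup>2) * ((v1-u1)\<^sup>2 + (v2-u2)\<^sup>2)"
    unfolding DD_def .
qed

lemma equidistant_iff_relative:
  fixes c x y z :: "real \<times> real"
  shows "(dist c x = dist c y \<and> dist c y = dist c z) \<longleftrightarrow>
    (2*((fst c - fst x)*(fst y - fst x) + (snd c - snd x)*(snd y - snd x)) = (fst y - fst x)\<^sup>2 + (snd y - snd x)\<^sup>2 \<and>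
     2*((fst c - fst x)*(fst z - fst x) + (snd c - snd x)*(snd z - snd x)) = (fst z - fst x)\<^sup>2 + (snd z - snd x)\<^sup>2)"
  using equidistant_iff_linear[of "fst c" "snd c" "fst x" "snd x" "fst y" "snd y" "fst z" "snd z"] by simp

lemma collinear_no_equidistant:
  fixes x y z :: "real \<times> real"
  assumes "orient x y z = 0" and "x \<noteq> y" "y \<noteq> z" "x \<noteq> z"
  shows "\<not> (\<exists>c. dist c x = dist c y \<and> dist c y = dist c z)"
proof
  assume "\<exists>c. dist c x = dist c y \<and> dist c y = dist c z"
  then obtain c where "dist c x = dist c y \<and> dist c y = dist c z" by blast
  moreover have "(fst y - fst x, snd y - snd x) \<noteq> (0, 0)" "(fst z - fst x, snd z - snd x) \<noteq> (0, 0)"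
    "(fst y - fst x, snd y - snd x) \<noteq> (fst z - fst x, snd z - snd x)"
    using assms(2-4) by (auto simp: prod_eq_iff)
  ultimately show False
    using assms(1) parallel_system_unsolvable unfolding equidistant_iff_relative orient_def by blast
qed

lemma circumradius_noncollinear:
  fixes x y z :: "real \<times> real"
  assumes "orient x y z \<noteq> 0"
  shows "\<exists>c. dist c x = dist c y \<and> dist c y = dist c z"
    and "circumradius x y z = dist x y * dist y z * dist x z / (2 * \<bar>orient x y z\<bar>)"
proof -
  define u1 where "u1 = fst y - fst x"
  define u2 where "u2 = snd y - snd x"
  define v1 where "v1 = fst z - fst x"
  define v2 where "v2 = snd z - snd x"
  have D: "u1 * v2 - u2 * v1 \<noteq> 0" and orient: "orient x y z = u1 * v2 - u2 * v1"
    using assms unfolding orient_def u1_def u2_def v1_def v2_def by simp_all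
  note eqs = equidistant_iff_relative[of _ x y z, folded u1_def u2_def v1_def v2_def]
  define w1 where "w1 = ((u1\<^sup>2 + u2\<^sup>2) * v2 - (v1\<^sup>2 + v2\<^sup>2)*u2) / (2*(u1 * v2 - u2 * v1))"
  define w2 where "w2 = ((v1\<^sup>2 + v2\<^sup>2)*u1 - (u1\<^sup>2 + u2\<^sup>2) * v1) / (2*(u1 * v2 - u2 * v1))"
  note center = circumcenter_exists[OF D, folded w1_def w2_def]
  define R where "R = sqrt (w1\<^sup>2 + w2\<^sup>2)"
  define c0 where "c0 = (fst x + w1, snd x + w2)"
  have c0: "dist c0 x = dist c0 y \<and> dist c0 y = dist c0 z"
    using eqs[of c0] center(1,2) by (simp add: c0_def)
  then show "\<exists>c. dist c x = dist c y \<and> dist c y = dist c z" by blast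
  have "circumradius x y z = R"
    unfolding circumradius_def
  proof (rule the_equality)
    have "dist c0 x = R" unfolding c0_def R_def dist_prod_def dist_real_def by simp
    then show "\<exists>c. dist c x = R \<and> dist c y = R \<and> dist c z = R" using c0 by metis
  next
    fix r assume "\<exists>c. dist c x = r \<and> dist c y = r \<and> dist c z = r"
    then obtain c where c: "dist c x = r" "dist c y = r" "dist c z = r" by blast
    then have "fst c - fst x = w1" "snd c - snd x = w2"
      using eqs[of c] circumcenter_unique[OF _ _ D] unfolding w1_def w2_def by auto
    then show "r = R" using c(1) unfolding R_def dist_prod_def dist_real_def by (simp add: power2_commute)
  qed
  moreover have "dist x y * dist y z * dist x z = sqrt ((w1\<^sup>2 + w2\<^sup>2) * (4 * (u1 * v2 - u2 * v1)\<^sup>2))"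
  proof -
    have "dist x y = sqrt (u1\<^sup>2 + u2\<^sup>2)" "dist x z = sqrt (v1\<^sup>2 + v2\<^sup>2)"
      "dist y z = sqrt ((v1-u1)\<^sup>2 + (v2-u2)\<^sup>2)"
      unfolding dist_prod_def dist_real_def u1_def u2_def v1_def v2_def by (simp_all add: power2_commute)
    then show ?thesis unfolding center(3) by (simp add: real_sqrt_mult)
  qed
  ultimately show "circumradius x y z = dist x y * dist y z * dist x z / (2 * \<bar>orient x y z\<bar>)"
    using D unfolding orient R_def by (simp add: real_sqrt_mult real_sqrt_abs)
qed

lemma menger_kappa_area_formula: "menger_kappa x y z = area_curvature x y z"
proof (cases "x \<noteq> y \<and> y \<noteq> z \<and> x \<noteq> z")
  case False
  then show ?thesis unfolding menger_kappa_def area_curvature_def by auto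
next
  case distinct: True
  show ?thesis
  proof (cases "orient x y z = 0")
    case True
    then show ?thesis using collinear_no_equidistant[OF True] distinct
      unfolding menger_kappa_def area_curvature_def by auto
  next
    case False
    then show ?thesis using circumradius_noncollinear[OF False] distinct
      unfolding menger_kappa_def area_curvature_def by simp
  qed
qed

lemma menger_kappa_nonneg: "0 \<le> menger_kappa (x :: real \<times> real) y z"
  unfolding menger_kappa_area_formula by (rule area_curvature_nonneg)

section \<open>Distortion of curvature under the shear\<close>

lemma area_curvature_distortion:
  fixes A :: "real \<times> real \<Rightarrow> real \<times> real"
  assumes K: "0 < K" and colip: "\<And>p q. dist p q \<le> K * dist (A p) (A q)"
    and area: "\<And>x y z. orient (A x) (A y) (A z) = d * orient x y z"
  shows "area_curvature (A x) (A y) (A z) \<le> (\<bar>d\<bar> * K^3) * area_curvature x y z"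
proof (cases "x = y \<or> y = z \<or> x = z")
  case True
  then show ?thesis using K area_curvature_nonneg[of x y z] by (auto simp: area_curvature_def)
next
  case False
  define P where "P = dist x y * dist y z * dist x z"
  define PA where "PA = dist (A x) (A y) * dist (A y) (A z) * dist (A x) (A z)"
  have P_pos: "0 < P" unfolding P_def using False by simp
  have "P \<le> (K * dist (A x) (A y)) * (K * dist (A y) (A z)) * (K * dist (A x) (A z))"
    unfolding P_def using K by (intro mult_mono colip) auto
  also have "\<dots> = K^3 * PA" unfolding PA_def by (simp add: power3_eq_cube ac_simps)
  finally have P_le: "P \<le> K^3 * PA" .
  then have "0 < K^3 * PA" using P_pos by linarith
  then have "0 < PA" using K by (simp add: zero_less_mult_iff)
  then have "1 / PA \<le> K^3 / P" using P_le P_pos by (simp add: divide_simps mult.commute)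
  then have "(2 * \<bar>d\<bar> * \<bar>orient x y z\<bar>) * (1 / PA) \<le> (2 * \<bar>d\<bar> * \<bar>orient x y z\<bar>) * (K^3 / P)"
    by (rule mult_left_mono) simp
  then show ?thesis unfolding area_curvature_def area PA_def P_def by (simp add: abs_mult ac_simps)
qed

(* The shear is co-Lipschitz: the horizontal and vertical components of p - q are controlled by
   those of A p - A q. *)
lemma dist_le_dist_shear:
  assumes s: "sin \<phi> \<noteq> 0"
  shows "dist p q \<le> (1 + 2 / \<bar>sin \<phi>\<bar>) * dist (shear \<phi> p) (shear \<phi> q)"
proof -
  obtain a b c d where pq: "p = (a, b)" "q = (c, d)" by (cases p, cases q)
  define \<alpha> where "\<alpha> = (a - c) + (b - d) * cos \<phi>"
  define \<beta> where "\<beta> = (b - d) * sin \<phi>"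
  define N where "N = sqrt (\<alpha>\<^sup>2 + \<beta>\<^sup>2)"
  have dN: "dist (shear \<phi> p) (shear \<phi> q) = N"
    unfolding pq shear_def dist_pair N_def \<alpha>_def \<beta>_def by (simp add: algebra_simps)
  have aN: "\<bar>\<alpha>\<bar> \<le> N" and bN: "\<bar>\<beta>\<bar> \<le> N" unfolding N_def by simp_all
  have vertical: "\<bar>b - d\<bar> \<le> N / \<bar>sin \<phi>\<bar>"
    using bN s unfolding \<beta>_def by (simp add: abs_mult le_divide_eq)
  have "\<bar>(b - d) * cos \<phi>\<bar> \<le> \<bar>b - d\<bar>" by (simp add: abs_mult mult_left_le)
  then have horizontal: "\<bar>a - c\<bar> \<le> N + N / \<bar>sin \<phi>\<bar>" using aN vertical unfolding \<alpha>_def by linarith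
  have "dist p q \<le> \<bar>a - c\<bar> + \<bar>b - d\<bar>" unfolding pq dist_pair by (rule sqrt_sum_squares_le_sum_abs)
  also have "\<dots> \<le> N + 2 * (N / \<bar>sin \<phi>\<bar>)" using horizontal vertical by linarith
  also have "\<dots> = (1 + 2 / \<bar>sin \<phi>\<bar>) * N" by (simp add: algebra_simps)
  finally show ?thesis using dN by simp
qed

lemma orient_shear: "orient (shear \<phi> x) (shear \<phi> y) (shear \<phi> z) = sin \<phi> * orient x y z"
  unfolding orient_def shear_def by simp algebra

definition shear_constant :: "real \<Rightarrow> real" where
  "shear_constant \<phi> = \<bar>sin \<phi>\<bar> * (1 + 2 / \<bar>sin \<phi>\<bar>)^3"

lemma shear_constant_pos: "sin \<phi> \<noteq> 0 \<Longrightarrow> 0 < shear_constant \<phi>"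
  unfolding shear_constant_def by (simp add: add_pos_nonneg)

lemma menger_kappa_shear:
  assumes "sin \<phi> \<noteq> 0"
  shows "menger_kappa (shear \<phi> x) (shear \<phi> y) (shear \<phi> z) \<le> shear_constant \<phi> * menger_kappa x y z"
  unfolding menger_kappa_area_formula shear_constant_def
  using assms by (intro area_curvature_distortion dist_le_dist_shear orient_shear) (auto intro: add_pos_nonneg)

section \<open>Comparison of the energies\<close>

(* Since the shear maps E_{pi/2} onto E_phi, the suprema defining kappa_i and kappa_G over
   E_phi are suprema over sheared points of E_{pi/2}. *)
lemma kappa_i_shear:
  assumes s: "sin \<phi> \<noteq> 0"
  shows "kappa_i (E_set \<phi>) (shear \<phi> x) (shear \<phi> y) \<le> ennreal (shear_constant \<phi>) * kappa_i (E_set (pi/2)) x y"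
  unfolding kappa_i_def shear_image_E_set[symmetric, of \<phi>] image_image
proof (rule SUP_least)
  fix z assume z: "z \<in> E_set (pi/2)"
  have "ennreal (menger_kappa (shear \<phi> x) (shear \<phi> y) (shear \<phi> z))
      \<le> ennreal (shear_constant \<phi>) * ennreal (menger_kappa x y z)"
    using menger_kappa_shear[OF s] shear_constant_pos[OF s] menger_kappa_nonneg
    by (simp add: ennreal_leI flip: ennreal_mult)
  also have "\<dots> \<le> ennreal (shear_constant \<phi>) * (SUP z\<in>E_set (pi/2). ennreal (menger_kappa x y z))"
    using z by (intro mult_left_mono SUP_upper) simp_all
  finally show "ennreal (menger_kappa (shear \<phi> x) (shear \<phi> y) (shear \<phi> z))
      \<le> ennreal (shear_constant \<phi>) * (SUP z\<in>E_set (pi/2). ennreal (menger_kappa x y z))" .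
qed

lemma kappa_G_shear:
  assumes s: "sin \<phi> \<noteq> 0"
  shows "kappa_G (E_set \<phi>) (shear \<phi> x) \<le> ennreal (shear_constant \<phi>) * kappa_G (E_set (pi/2)) x"
  unfolding kappa_G_def
proof (rule SUP_least)
  fix yz assume "yz \<in> E_set \<phi> \<times> E_set \<phi>"
  then have "fst yz \<in> shear \<phi> ` E_set (pi/2)" "snd yz \<in> shear \<phi> ` E_set (pi/2)"
    unfolding shear_image_E_set by auto
  then obtain y z where yz: "y \<in> E_set (pi/2)" "z \<in> E_set (pi/2)"
    "yz = (shear \<phi> y, shear \<phi> z)"
    by (metis imageE prod.collapse)
  have "ennreal (menger_kappa (shear \<phi> x) (fst yz) (snd yz))
      \<le> ennreal (shear_constant \<phi>) * ennreal (menger_kappa x (fst (y, z)) (snd (y, z)))"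
    using menger_kappa_shear[OF s] shear_constant_pos[OF s] menger_kappa_nonneg yz(3)
    by (simp add: ennreal_leI flip: ennreal_mult)
  also have "\<dots> \<le> ennreal (shear_constant \<phi>)
      * (SUP yz\<in>E_set (pi/2) \<times> E_set (pi/2). ennreal (menger_kappa x (fst yz) (snd yz)))"
    using yz by (intro mult_left_mono SUP_upper) simp_all
  finally show "ennreal (menger_kappa (shear \<phi> x) (fst yz) (snd yz)) \<le> ennreal (shear_constant \<phi>)
      * (SUP yz\<in>E_set (pi/2) \<times> E_set (pi/2). ennreal (menger_kappa x (fst yz) (snd yz)))" .
qed

lemma epow_mono: "a \<le> b \<Longrightarrow> 0 < p \<Longrightarrow> epow a p \<le> epow b p"
  unfolding epow_def
  by (auto intro!: ennreal_leI powr_mono2 enn2real_mono simp: top_unique[symmetric] less_top)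

lemma epow_cmult:
  assumes "0 < C" "0 < p"
  shows "epow (ennreal C * t) p = ennreal (C powr p) * epow t p"
proof (cases "t = \<infinity>")
  case True
  then show ?thesis using assms by (simp add: epow_def ennreal_mult_top)
next
  case False
  then have "ennreal C * t \<noteq> \<infinity>" "enn2real (ennreal C * t) = C * enn2real t"
    using assms by (simp_all add: ennreal_mult_eq_top_iff enn2real_mult)
  then show ?thesis using False assms by (simp add: epow_def powr_mult ennreal_mult enn2real_nonneg)
qed

lemma epow_shear_bound:
  assumes s: "sin \<phi> \<noteq> 0" and p: "0 < p" and le: "a \<le> ennreal (shear_constant \<phi>) * b"
  shows "epow a p \<le> ennreal (shear_constant \<phi> powr p) * epow b p"
  using epow_mono[OF le p] epow_cmult[OF shear_constant_pos[OF s] p] by simp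

lemma M_energy_le:
  assumes s: "sin \<phi> \<noteq> 0" and p: "0 < p"
  shows "M_energy p (E_set \<phi>) \<le> ennreal (shear_constant \<phi> powr p) * M_energy p (E_set (pi/2))"
proof -
  define i where "i = (indicator (E_set \<phi>) :: real \<times> real \<Rightarrow> ennreal)"
  define j where "j = (indicator (E_set (pi/2)) :: real \<times> real \<Rightarrow> ennreal)"
  define K where "K x y z = ennreal (menger_kappa x y z powr p)" for x y z :: "real \<times> real"
  define A where "A = shear \<phi>"
  have cp: "0 < shear_constant \<phi> powr p" using shear_constant_pos[OF s] by simp
  have K_bound: "K (A x) (A y) (A z) \<le> ennreal (shear_constant \<phi> powr p) * K x y z" for x y z
  proof -
    have "menger_kappa (A x) (A y) (A z) powr p \<le> (shear_constant \<phi> * menger_kappa x y z) powr p"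
      unfolding A_def using menger_kappa_shear[OF s] menger_kappa_nonneg p by (intro powr_mono2) auto
    also have "\<dots> = shear_constant \<phi> powr p * menger_kappa x y z powr p"
      using shear_constant_pos[OF s] menger_kappa_nonneg by (simp add: powr_mult)
    finally show ?thesis unfolding K_def using cp by (simp add: ennreal_leI flip: ennreal_mult)
  qed
  have "M_energy p (E_set \<phi>) = (\<integral>\<^sup>+x. i x * (\<integral>\<^sup>+y. i y * (\<integral>\<^sup>+z. i z * K x y z \<partial>H1) \<partial>H1) \<partial>H1)"
    unfolding M_energy_def i_def K_def by (simp add: mult.assoc nn_integral_indicator_factor)
  also have "\<dots> \<le> (\<integral>\<^sup>+x. i x * (\<integral>\<^sup>+y. i y * (\<integral>\<^sup>+z. j z * K x y (A z) \<partial>H1) \<partial>H1) \<partial>H1)"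
    unfolding i_def j_def A_def by (intro nn_integral_mono mult_left_mono nn_integral_E_set_le[OF s]) simp_all
  also have "\<dots> \<le> (\<integral>\<^sup>+x. i x * (\<integral>\<^sup>+y. j y * (\<integral>\<^sup>+z. j z * K x (A y) (A z) \<partial>H1) \<partial>H1) \<partial>H1)"
    unfolding i_def j_def A_def
    by (intro nn_integral_mono mult_left_mono nn_integral_E_set_le[OF s,
          where f = "\<lambda>y. \<integral>\<^sup>+z. indicator (E_set (pi/2)) z * K _ y (shear \<phi> z) \<partial>H1"]) simp_all
  also have "\<dots> \<le> (\<integral>\<^sup>+x. j x * (\<integral>\<^sup>+y. j y * (\<integral>\<^sup>+z. j z * K (A x) (A y) (A z) \<partial>H1) \<partial>H1) \<partial>H1)"
    unfolding i_def j_def A_def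
    by (rule nn_integral_E_set_le[OF s, where f = "\<lambda>x. \<integral>\<^sup>+y. indicator (E_set (pi/2)) y
          * (\<integral>\<^sup>+z. indicator (E_set (pi/2)) z * K x (shear \<phi> y) (shear \<phi> z) \<partial>H1) \<partial>H1"])
  also have "\<dots> \<le> ennreal (shear_constant \<phi> powr p)
      * (\<integral>\<^sup>+x. j x * (\<integral>\<^sup>+y. j y * (\<integral>\<^sup>+z. j z * K x y z \<partial>H1) \<partial>H1) \<partial>H1)"
    by (intro nn_integral_weighted_le[OF cp] K_bound)
  also have "(\<integral>\<^sup>+x. j x * (\<integral>\<^sup>+y. j y * (\<integral>\<^sup>+z. j z * K x y z \<partial>H1) \<partial>H1) \<partial>H1) = M_energy p (E_set (pi/2))"
    unfolding M_energy_def j_def K_def by (simp add: mult.assoc nn_integral_indicator_factor)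
  finally show ?thesis .
qed

lemma I_energy_le:
  assumes s: "sin \<phi> \<noteq> 0" and p: "0 < p"
  shows "I_energy p (E_set \<phi>) \<le> ennreal (shear_constant \<phi> powr p) * I_energy p (E_set (pi/2))"
proof -
  define i where "i = (indicator (E_set \<phi>) :: real \<times> real \<Rightarrow> ennreal)"
  define j where "j = (indicator (E_set (pi/2)) :: real \<times> real \<Rightarrow> ennreal)"
  define K where "K x y = epow (kappa_i (E_set \<phi>) x y) p" for x y :: "real \<times> real"
  define K0 where "K0 x y = epow (kappa_i (E_set (pi/2)) x y) p" for x y :: "real \<times> real"
  define A where "A = shear \<phi>"
  have cp: "0 < shear_constant \<phi> powr p" using shear_constant_pos[OF s] by simp
  have K_bound: "K (A x) (A y) \<le> ennreal (shear_constant \<phi> powr p) * K0 x y" for x y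
    unfolding K_def K0_def A_def by (rule epow_shear_bound[OF s p kappa_i_shear[OF s]])
  have "I_energy p (E_set \<phi>) = (\<integral>\<^sup>+x. i x * (\<integral>\<^sup>+y. i y * K x y \<partial>H1) \<partial>H1)"
    unfolding I_energy_def i_def K_def by (simp add: mult.assoc nn_integral_indicator_factor)
  also have "\<dots> \<le> (\<integral>\<^sup>+x. i x * (\<integral>\<^sup>+y. j y * K x (A y) \<partial>H1) \<partial>H1)"
    unfolding i_def j_def A_def by (intro nn_integral_mono mult_left_mono nn_integral_E_set_le[OF s]) simp_all
  also have "\<dots> \<le> (\<integral>\<^sup>+x. j x * (\<integral>\<^sup>+y. j y * K (A x) (A y) \<partial>H1) \<partial>H1)"
    unfolding i_def j_def A_def
    by (rule nn_integral_E_set_le[OF s, where f = "\<lambda>x. \<integral>\<^sup>+y. indicator (E_set (pi/2)) y * K x (shear \<phi> y) \<partial>H1"])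
  also have "\<dots> \<le> ennreal (shear_constant \<phi> powr p) * (\<integral>\<^sup>+x. j x * (\<integral>\<^sup>+y. j y * K0 x y \<partial>H1) \<partial>H1)"
    by (intro nn_integral_weighted_le[OF cp] K_bound)
  also have "(\<integral>\<^sup>+x. j x * (\<integral>\<^sup>+y. j y * K0 x y \<partial>H1) \<partial>H1) = I_energy p (E_set (pi/2))"
    unfolding I_energy_def j_def K0_def by (simp add: mult.assoc nn_integral_indicator_factor)
  finally show ?thesis .
qed

lemma U_energy_le:
  assumes s: "sin \<phi> \<noteq> 0" and p: "0 < p"
  shows "U_energy p (E_set \<phi>) \<le> ennreal (shear_constant \<phi> powr p) * U_energy p (E_set (pi/2))"
proof -
  have cp: "0 < shear_constant \<phi> powr p" using shear_constant_pos[OF s] by simp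
  have "U_energy p (E_set \<phi>)
      \<le> (\<integral>\<^sup>+x. indicator (E_set (pi/2)) x * epow (kappa_G (E_set \<phi>) (shear \<phi> x)) p \<partial>H1)"
    unfolding U_energy_def by (rule nn_integral_E_set_le[OF s])
  also have "\<dots> \<le> ennreal (shear_constant \<phi> powr p) * U_energy p (E_set (pi/2))"
    unfolding U_energy_def
    by (intro nn_integral_weighted_le[OF cp] epow_shear_bound[OF s p kappa_G_shear[OF s]])
  finally show ?thesis .
qed

(* If sin phi = 0, E_phi lies on the horizontal axis, so every curvature on it vanishes. *)
lemma menger_kappa_E_set_degenerate:
  assumes s: "sin \<phi> = 0" and "x \<in> E_set \<phi>" "y \<in> E_set \<phi>" "z \<in> E_set \<phi>"
  shows "menger_kappa x y z = 0"
proof -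
  have "snd w = 0" if "w \<in> E_set \<phi>" for w using that s unfolding E_set_def by auto
  then have "orient x y z = 0" using assms unfolding orient_def by simp
  then show ?thesis unfolding menger_kappa_area_formula area_curvature_def by simp
qed

lemma energies_degenerate:
  assumes s: "sin \<phi> = 0"
  shows "U_energy p (E_set \<phi>) = 0" "I_energy p (E_set \<phi>) = 0" "M_energy p (E_set \<phi>) = 0"
proof -
  note kappa0 = menger_kappa_E_set_degenerate[OF s]
  have epow0: "epow 0 p = 0" by (simp add: epow_def)
  have "kappa_G (E_set \<phi>) x = 0" if "x \<in> E_set \<phi>" for x
    unfolding kappa_G_def using kappa0[OF that] by (simp add: mem_Times_iff SUP_constant bot_ennreal)
  then have U_integrand: "indicator (E_set \<phi>) x * epow (kappa_G (E_set \<phi>) x) p = (0::ennreal)" for x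
    by (cases "x \<in> E_set \<phi>") (simp_all add: epow0)
  then show "U_energy p (E_set \<phi>) = 0" unfolding U_energy_def U_integrand by simp
  have "kappa_i (E_set \<phi>) x y = 0" if "x \<in> E_set \<phi>" "y \<in> E_set \<phi>" for x y
    unfolding kappa_i_def using kappa0[OF that] by (simp add: SUP_constant bot_ennreal)
  then have I_integrand: "indicator (E_set \<phi>) x * indicator (E_set \<phi>) y * epow (kappa_i (E_set \<phi>) x y) p = (0::ennreal)" for x y
    by (cases "x \<in> E_set \<phi>"; cases "y \<in> E_set \<phi>") (simp_all add: epow0)
  then show "I_energy p (E_set \<phi>) = 0" unfolding I_energy_def I_integrand by simp
  have M_integrand: "indicator (E_set \<phi>) x * indicator (E_set \<phi>) y * indicator (E_set \<phi>) z
        * ennreal (menger_kappa x y z powr p) = (0::ennreal)" for x y z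
    by (cases "x \<in> E_set \<phi>"; cases "y \<in> E_set \<phi>"; cases "z \<in> E_set \<phi>") (simp_all add: kappa0)
  then show "M_energy p (E_set \<phi>) = 0" unfolding M_energy_def M_integrand by simp
qed

theorem mainTheorem2:
  fixes \<phi> :: real
  shows "\<exists>c::real. c > 0 \<and> (\<forall>p::real. p > 0 \<longrightarrow>
           U_energy p (E_set \<phi>) \<le> ennreal (c powr p) * U_energy p (E_set (pi/2)) \<and>
           I_energy p (E_set \<phi>) \<le> ennreal (c powr p) * I_energy p (E_set (pi/2)) \<and>
           M_energy p (E_set \<phi>) \<le> ennreal (c powr p) * M_energy p (E_set (pi/2)))"
proof (cases "sin \<phi> = 0")
  case True
  then show ?thesis by (intro exI[of _ 1]) (simp add: energies_degenerate)
next
  case False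
  then show ?thesis
    using shear_constant_pos U_energy_le I_energy_le M_energy_le
    by (intro exI[of _ "shear_constant \<phi>"]) blast
qed

end
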